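(* Let $p\ge3$ be a prime and let $d\ge2$ be an integer. There exists $\Theta(d,p)$ such that whenever $T:[n_1]\times\dots\times[n_d]\to\mathbb{F}_p$ is an order-$d$ tensor with $\mathrm{tr}\,T\ge\Theta(d,p)$ and $S_1,\dots,S_d$ are subsets of $\mathbb{F}_p$ each containing at least two elements, the $d$-linear form $m$ associated with $T$ satisfies $m(S_1^{n_1}\times\dots\times S_d^{n_d})=\mathbb{F}_p$.
   Context: The $d$-linear form associated with $T$ is $m:\mathbb{F}_p^{n_1}\times\dots\times\mathbb{F}_p^{n_d}\to\mathbb{F}_p$, $m(x^1,\dots,x^d)=\sum_{(i_1,\dots,i_d)}T(i_1,\dots,i_d)x^1_{i_1}\cdots x^d_{i_d}$. The tensor rank $\mathrm{tr}\,T$ is the least $k\ge0$ such that there exist functions $a_{i,\alpha}:[n_\alpha]\to\mathbb{F}_p$ ($i\in[k],\alpha\in[d]$) with $T(x_1,\dots,x_d)=\sum_{i=1}^ka_{i,1}(x_1)\cdots a_{i,d}(x_d)$ for all $(x_1,\dots,x_d)$. *)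

theory Defs
  imports Main "HOL-Library.FuncSet" "HOL-Library.Cardinality" "HOL-Computational_Algebra.Primes"
begin

text \<open>An order-d tensor with dimensions n 0, ..., n (d-1) over a field 'a is a function
  on index tuples; index tuples are the extensional functions in
  PiE {0..<d} (\<lambda>a. {0..<n a}) (coordinates are 0-based).\<close>

definition tensor_indices :: "nat \<Rightarrow> (nat \<Rightarrow> nat) \<Rightarrow> (nat \<Rightarrow> nat) set" where
  "tensor_indices d n = PiE {0..<d} (\<lambda>a. {0..<n a})"

definition tensor_rank :: "nat \<Rightarrow> (nat \<Rightarrow> nat) \<Rightarrow> ((nat \<Rightarrow> nat) \<Rightarrow> 'a::field) \<Rightarrow> nat" where
  "tensor_rank d n T = (LEAST k. \<exists>f :: nat \<Rightarrow> nat \<Rightarrow> nat \<Rightarrow> 'a.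
      \<forall>i \<in> tensor_indices d n. T i = (\<Sum>r<k. \<Prod>a<d. f r a (i a)))"

definition multilinear_form :: "nat \<Rightarrow> (nat \<Rightarrow> nat) \<Rightarrow> ((nat \<Rightarrow> nat) \<Rightarrow> 'a::field)
    \<Rightarrow> (nat \<Rightarrow> nat \<Rightarrow> 'a) \<Rightarrow> 'a" where
  "multilinear_form d n T x = (\<Sum>i \<in> tensor_indices d n. T i * (\<Prod>a<d. x a (i a)))"

end

theory Submission
  imports Defs "HOL-Number_Theory.Residues"
begin

text \<open>
  Fix two distinct values \<open>s\<^sub>a, t\<^sub>a \<in> S\<^sub>a\<close> in every direction. If \<open>T\<close> has a matching (nonzero
  entries no two of which share a coordinate in any direction) of size at least \<open>2\<^sup>d p\<close>, the form
  attains every value: setting the first argument to \<open>t\<^sub>a\<close> on the coordinates of a well-chosen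
  part of the matching and to \<open>s\<^sub>a\<close> elsewhere contracts \<open>T\<close> to a tensor of order \<open>d - 1\<close> that
  keeps a matching of half the size (an averaging argument), and in order one the subset sums of
  \<open>p - 1\<close> nonzero elements of \<open>\<bbbF>\<^sub>p\<close> already cover \<open>\<bbbF>\<^sub>p\<close> (Cauchy--Davenport).

  Otherwise a maximum matching is small, and by maximality every nonzero entry of \<open>T\<close> shares a
  coordinate with it. Hence \<open>T\<close> is a sum of boundedly many slices, each of which is
  \<open>(t\<^sub>a - s\<^sub>a)\<^sup>-\<^sup>1\<close> times the difference of two contractions of \<open>T\<close>. If the form of \<open>T\<close> misses
  a value, so do these contractions, and induction on the order bounds their rank.
\<close>

lemma two_distinct_elements:
  assumes "2 \<le> card A"
  obtains s t where "s \<in> A" "t \<in> A" "s \<noteq> t"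
proof -
  have "A \<noteq> {}" using assms by auto
  then obtain s where s: "s \<in> A" by blast
  have "card (A - {s}) \<ge> 1" using assms s by (simp add: card_Diff_singleton_if)
  then have "A - {s} \<noteq> {}" by (metis card.empty not_one_le_zero)
  then obtain t where "t \<in> A - {s}" by blast
  with s that show ?thesis by blast
qed

section \<open>Subset sums in prime fields\<close>

lemma translation_invariant_eq_UNIV:
  fixes u :: "'a::{field,finite}"
  assumes p: "prime p" "CARD('a) = p" and "u \<noteq> 0" "v \<in> V"
    and closed: "(\<lambda>w. w + u) ` V \<subseteq> V"
  shows "V = UNIV"
proof -
  have "CHAR('a) dvd p" "CHAR('a) \<noteq> 1"
    using CHAR_dvd_CARD[where 'a='a] p by simp_all
  then have "CHAR('a) = p" using p prime_nat_iff by blast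
  then have inj: "inj_on (\<lambda>j. v + of_nat j * u) {..<p}"
    using \<open>u \<noteq> 0\<close> by (intro inj_onI) (auto simp: of_nat_eq_iff_cong_CHAR cong_def)
  have orbit: "v + of_nat j * u \<in> V" for j
    by (induction j) (use \<open>v \<in> V\<close> closed in \<open>auto simp: algebra_simps\<close>)
  have "card ((\<lambda>j. v + of_nat j * u) ` {..<p}) = CARD('a)"
    using card_image[OF inj] p by simp
  then have orbit_UNIV: "(\<lambda>j. v + of_nat j * u) ` {..<p} = UNIV"
    by (simp add: card_subset_eq)
  show ?thesis
  proof
    show "UNIV \<subseteq> V"
      unfolding orbit_UNIV[symmetric] using orbit by blast
  qed simp
qed

lemma card_union_translate_ge:
  fixes u :: "'a::{field,finite}"
  assumes p: "prime p" "CARD('a) = p" and "u \<noteq> 0" "V \<noteq> {}"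
  shows "min p (card V + 1) \<le> card (V \<union> (\<lambda>w. w + u) ` V)"
proof (cases "(\<lambda>w. w + u) ` V \<subseteq> V")
  case True
  then have "V = UNIV"
    using translation_invariant_eq_UNIV[OF p \<open>u \<noteq> 0\<close>] \<open>V \<noteq> {}\<close> by blast
  then show ?thesis using p by simp
next
  case False
  then have "card V < card (V \<union> (\<lambda>w. w + u) ` V)"
    by (intro psubset_card_mono) auto
  then show ?thesis by simp
qed

lemma card_subset_sums_ge:
  fixes u :: "nat \<Rightarrow> 'a::{field,finite}"
  assumes p: "prime p" "CARD('a) = p" and "finite J" "\<forall>j\<in>J. u j \<noteq> 0"
  shows "min p (card J + 1) \<le> card ((\<lambda>K. \<Sum>j\<in>K. u j) ` Pow J)"
  using assms(3,4)
proof (induction J rule: finite_induct)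
  case empty
  then show ?case by simp
next
  case (insert j J)
  let ?V = "(\<lambda>K. \<Sum>j\<in>K. u j) ` Pow J"
  have "(\<lambda>w. w + u j) ` ?V \<subseteq> (\<lambda>K. \<Sum>j\<in>K. u j) ` Pow (insert j J)"
  proof
    fix w assume "w \<in> (\<lambda>w. w + u j) ` ?V"
    then obtain K where "K \<subseteq> J" "w = (\<Sum>j\<in>K. u j) + u j" by blast
    moreover from this have "(\<Sum>j\<in>insert j K. u j) = (\<Sum>j\<in>K. u j) + u j"
      using insert.hyps finite_subset by (subst sum.insert) (auto simp: add.commute)
    ultimately show "w \<in> (\<lambda>K. \<Sum>j\<in>K. u j) ` Pow (insert j J)"
      by (intro image_eqI[of _ _ "insert j K"]) auto
  qed
  then have "?V \<union> (\<lambda>w. w + u j) ` ?V \<subseteq> (\<lambda>K. \<Sum>j\<in>K. u j) ` Pow (insert j J)"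
    by auto
  moreover have "min p (card ?V + 1) \<le> card (?V \<union> (\<lambda>w. w + u j) ` ?V)"
    using card_union_translate_ge[OF p, of "u j" ?V] insert.prems by blast
  ultimately have "min p (card ?V + 1) \<le> card ((\<lambda>K. \<Sum>j\<in>K. u j) ` Pow (insert j J))"
    by (meson card_mono finite order_trans)
  moreover have "min p (card J + 1) \<le> card ?V" using insert by simp
  ultimately show ?case using insert.hyps by (simp add: min_def split: if_splits)
qed

lemma linear_form_attains_all:
  fixes w :: "nat \<Rightarrow> 'a::{field,finite}"
  assumes p: "prime p" "CARD('a) = p" and "s \<noteq> t"
    and support: "p \<le> card {j. j < N \<and> w j \<noteq> 0} + 1"
  shows "\<exists>y. (\<forall>j<N. y j \<in> {s, t}) \<and> (\<Sum>j<N. w j * y j) = v"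
proof -
  define J where "J = {j. j < N \<and> w j \<noteq> 0}"
  define u where "u j = w j * (t - s)" for j
  have "p \<le> card ((\<lambda>K. \<Sum>j\<in>K. u j) ` Pow J)"
    using card_subset_sums_ge[OF p, of J u] support \<open>s \<noteq> t\<close> by (simp add: J_def u_def)
  then have "card ((\<lambda>K. \<Sum>j\<in>K. u j) ` Pow J) = CARD('a)"
    using p card_mono[of UNIV "(\<lambda>K. \<Sum>j\<in>K. u j) ` Pow J"] by simp
  then have "(\<lambda>K. \<Sum>j\<in>K. u j) ` Pow J = UNIV"
    by (simp add: card_subset_eq)
  then obtain K where K: "K \<subseteq> J" "(\<Sum>j\<in>K. u j) = v - (\<Sum>j<N. w j * s)"
    by (metis (no_types, lifting) PowD UNIV_I imageE)
  define y where "y j = (if j \<in> K then t else s)" for j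
  have "(\<Sum>j<N. w j * y j) = (\<Sum>j<N. w j * s + (if j \<in> K then u j else 0))"
    by (intro sum.cong) (auto simp: y_def u_def algebra_simps)
  also have "\<dots> = (\<Sum>j<N. w j * s) + (\<Sum>j\<in>K. u j)"
  proof -
    have "{..<N} \<inter> K = K" using K(1) by (auto simp: J_def)
    then show ?thesis by (simp add: sum.distrib sum.If_cases)
  qed
  finally have "(\<Sum>j<N. w j * y j) = v" using K(2) by simp
  moreover have "\<forall>j<N. y j \<in> {s, t}" by (simp add: y_def)
  ultimately show ?thesis by blast
qed

section \<open>Multilinear forms over finite sets of directions\<close>

definition index_tuples :: "nat set \<Rightarrow> (nat \<Rightarrow> nat) \<Rightarrow> (nat \<Rightarrow> nat) set" where
  "index_tuples D n = PiE D (\<lambda>a. {..<n a})"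

definition multilinear_form_on :: "nat set \<Rightarrow> (nat \<Rightarrow> nat) \<Rightarrow> ((nat \<Rightarrow> nat) \<Rightarrow> 'a::field)
    \<Rightarrow> (nat \<Rightarrow> nat \<Rightarrow> 'a) \<Rightarrow> 'a" where
  "multilinear_form_on D n T x = (\<Sum>i\<in>index_tuples D n. T i * (\<Prod>a\<in>D. x a (i a)))"

definition contract :: "nat \<Rightarrow> (nat \<Rightarrow> nat) \<Rightarrow> ((nat \<Rightarrow> nat) \<Rightarrow> 'a::field) \<Rightarrow> (nat \<Rightarrow> 'a)
    \<Rightarrow> (nat \<Rightarrow> nat) \<Rightarrow> 'a" where
  "contract a n T y j = (\<Sum>z<n a. T (j(a := z)) * y z)"

definition attains_all :: "nat set \<Rightarrow> (nat \<Rightarrow> nat) \<Rightarrow> ((nat \<Rightarrow> nat) \<Rightarrow> 'a::field)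
    \<Rightarrow> (nat \<Rightarrow> 'a set) \<Rightarrow> bool" where
  "attains_all D n T S \<longleftrightarrow>
     (\<forall>v. \<exists>x. (\<forall>a\<in>D. \<forall>j<n a. x a j \<in> S a) \<and> multilinear_form_on D n T x = v)"

lemma finite_index_tuples: "finite D \<Longrightarrow> finite (index_tuples D n)"
  by (simp add: index_tuples_def finite_PiE)

lemma index_tuples_restrict:
  "i \<in> index_tuples D n \<Longrightarrow> i(a := undefined) \<in> index_tuples (D - {a}) n"
  by (auto simp: index_tuples_def PiE_iff extensional_def)

lemma multilinear_form_on_remove:
  assumes "a \<in> D" "finite D"
  shows "multilinear_form_on D n T x = multilinear_form_on (D - {a}) n (contract a n T (x a)) x"
proof -
  let ?D' = "D - {a}"
  let ?upd = "\<lambda>(z, j). j(a := z)"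
  have D: "D = insert a ?D'" using assms by auto
  have split: "index_tuples D n = ?upd ` ({..<n a} \<times> index_tuples ?D' n)"
    unfolding index_tuples_def by (subst D, subst PiE_insert_eq) simp
  have inj: "inj_on ?upd ({..<n a} \<times> index_tuples ?D' n)"
    unfolding index_tuples_def using inj_combinator[of a ?D' "\<lambda>a. {..<n a}"] by simp
  have prod: "(\<Prod>b\<in>D. x b ((j(a := z)) b)) = x a z * (\<Prod>b\<in>?D'. x b (j b))" for j z
  proof -
    have "(\<Prod>b\<in>D. x b ((j(a := z)) b)) = x a z * (\<Prod>b\<in>?D'. x b ((j(a := z)) b))"
      using assms by (simp add: prod.remove)
    also have "(\<Prod>b\<in>?D'. x b ((j(a := z)) b)) = (\<Prod>b\<in>?D'. x b (j b))"
      by (rule prod.cong) auto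
    finally show ?thesis .
  qed
  have "multilinear_form_on D n T x
      = (\<Sum>(z, j)\<in>{..<n a} \<times> index_tuples ?D' n. T (j(a := z)) * (x a z * (\<Prod>b\<in>?D'. x b (j b))))"
    unfolding multilinear_form_on_def split sum.reindex[OF inj]
    by (simp add: case_prod_unfold prod del: fun_upd_apply)
  also have "\<dots> = (\<Sum>j\<in>index_tuples ?D' n. \<Sum>z<n a. T (j(a := z)) * (x a z * (\<Prod>b\<in>?D'. x b (j b))))"
    by (subst sum.cartesian_product[symmetric], subst sum.swap) simp
  also have "\<dots> = multilinear_form_on ?D' n (contract a n T (x a)) x"
    unfolding multilinear_form_on_def contract_def by (simp add: sum_distrib_right mult.assoc)
  finally show ?thesis .
qed

lemma multilinear_form_on_cong:
  "(\<And>a. a \<in> D \<Longrightarrow> x a = x' a) \<Longrightarrow> multilinear_form_on D n T x = multilinear_form_on D n T x'"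
  unfolding multilinear_form_on_def
  by (intro sum.cong refl arg_cong2[where f = "(*)"] prod.cong) auto

lemma multilinear_form_on_singleton:
  "multilinear_form_on {a} n T x = (\<Sum>z<n a. T ((\<lambda>_. undefined)(a := z)) * x a z)"
  using multilinear_form_on_remove[of a "{a}" n T x]
  by (simp add: multilinear_form_on_def index_tuples_def contract_def fun_upd_def)

lemma attains_all_if_contraction_attains_all:
  assumes "finite D" "a \<in> D" and y: "\<forall>z<n a. y z \<in> S a"
    and contraction: "attains_all (D - {a}) n (contract a n T y) S"
  shows "attains_all D n T S"
  unfolding attains_all_def
proof
  fix v
  obtain x where x: "\<forall>b\<in>D - {a}. \<forall>j<n b. x b j \<in> S b"
    "multilinear_form_on (D - {a}) n (contract a n T y) x = v"
    using contraction unfolding attains_all_def by blast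
  have "multilinear_form_on D n T (x(a := y))
      = multilinear_form_on (D - {a}) n (contract a n T y) (x(a := y))"
    using multilinear_form_on_remove[OF \<open>a \<in> D\<close> \<open>finite D\<close>, of n T "x(a := y)"] by simp
  also have "\<dots> = v"
    using x(2) by (subst multilinear_form_on_cong[of _ _ x]) auto
  finally show "\<exists>x. (\<forall>b\<in>D. \<forall>j<n b. x b j \<in> S b) \<and> multilinear_form_on D n T x = v"
    using x(1) y by (intro exI[of _ "x(a := y)"]) auto
qed

lemma contract_toggle_diff:
  assumes "v < n a" "v \<notin> W"
  shows "contract a n T (\<lambda>z. if z \<in> insert v W then t else s) j
           - contract a n T (\<lambda>z. if z \<in> W then t else s) j = T (j(a := v)) * (t - s)"
proof -
  have "contract a n T (\<lambda>z. if z \<in> insert v W then t else s) j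
          - contract a n T (\<lambda>z. if z \<in> W then t else s) j
      = (\<Sum>z<n a. if z = v then T (j(a := z)) * (t - s) else 0)"
    unfolding contract_def sum_subtractf[symmetric] using assms(2)
    by (intro sum.cong) (auto simp: algebra_simps)
  also have "\<dots> = T (j(a := v)) * (t - s)"
    using assms(1) by simp
  finally show ?thesis .
qed

section \<open>Large matchings force surjectivity\<close>

lemma averaging_over_subsets:
  assumes "finite I"
    and toggle: "\<And>l L. l \<in> I \<Longrightarrow> L \<subseteq> I - {l} \<Longrightarrow> P L l \<or> P (insert l L) l"
  shows "\<exists>L\<subseteq>I. card I \<le> 2 * card {l\<in>I. P L l}"
proof (rule ccontr)
  assume "\<not> ?thesis"
  then have small: "2 * card {l\<in>I. P L l} < card I" if "L \<in> Pow I" for L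
    using that by auto
  have many: "2 ^ card I \<le> 2 * card {L\<in>Pow I. P L l}" if l: "l \<in> I" for l
  proof -
    define f where "f L = (if P L l then L else insert l L)" for L
    have "inj_on f (Pow (I - {l}))"
    proof (rule inj_onI)
      fix L1 L2 assume "L1 \<in> Pow (I - {l})" "L2 \<in> Pow (I - {l})" "f L1 = f L2"
      then have "f L1 - {l} = f L2 - {l}" "l \<notin> L1" "l \<notin> L2" by auto
      then show "L1 = L2" unfolding f_def by (auto split: if_splits)
    qed
    moreover have "f ` Pow (I - {l}) \<subseteq> {L\<in>Pow I. P L l}"
      using toggle[OF l] l by (auto simp: f_def)
    ultimately have "card (Pow (I - {l})) \<le> card {L\<in>Pow I. P L l}"
      using \<open>finite I\<close> by (intro card_inj_on_le) auto
    moreover have "2 * card (Pow (I - {l})) = 2 ^ card I"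
      using \<open>finite I\<close> l by (cases "card I") (auto simp: card_Pow card_Diff_singleton)
    ultimately show ?thesis by linarith
  qed
  have "card I * 2 ^ card I \<le> (\<Sum>l\<in>I. 2 * card {L\<in>Pow I. P L l})"
    using sum_mono[of I "\<lambda>_. 2 ^ card I", OF many] by simp
  also have "\<dots> = 2 * (\<Sum>l\<in>I. \<Sum>L\<in>Pow I. if P L l then 1 else 0)"
    using \<open>finite I\<close> by (simp add: sum_distrib_left sum.If_cases Int_def)
  also have "\<dots> = 2 * (\<Sum>L\<in>Pow I. \<Sum>l\<in>I. if P L l then 1 else 0)"
    by (subst sum.swap) (rule refl)
  also have "\<dots> = (\<Sum>L\<in>Pow I. 2 * card {l\<in>I. P L l})"
    using \<open>finite I\<close> by (simp add: sum_distrib_left sum.If_cases Int_def conj_commute)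
  also have "\<dots> < (\<Sum>L\<in>Pow I. card I)"
    using \<open>finite I\<close> small by (intro sum_strict_mono) auto
  also have "\<dots> = card I * 2 ^ card I"
    using \<open>finite I\<close> by (simp add: card_Pow)
  finally show False by simp
qed

definition matching :: "nat set \<Rightarrow> (nat \<Rightarrow> nat) \<Rightarrow> ((nat \<Rightarrow> nat) \<Rightarrow> 'a::zero)
    \<Rightarrow> (nat \<Rightarrow> nat) set \<Rightarrow> bool" where
  "matching D n T M \<longleftrightarrow>
     M \<subseteq> index_tuples D n \<and> (\<forall>i\<in>M. T i \<noteq> 0) \<and> (\<forall>a\<in>D. inj_on (\<lambda>i. i a) M)"

lemma matching_finite: "finite D \<Longrightarrow> matching D n T M \<Longrightarrow> finite M"
  unfolding matching_def using finite_index_tuples finite_subset by blast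

lemma matching_singleton_attains_all:
  fixes T :: "(nat \<Rightarrow> nat) \<Rightarrow> 'a::{field,finite}"
  assumes p: "prime p" "CARD('a) = p"
    and "2 \<le> card (S a)" "matching {a} n T M" "p \<le> card M + 1"
  shows "attains_all {a} n T S"
proof -
  obtain s t where st: "s \<in> S a" "t \<in> S a" "s \<noteq> t"
    using two_distinct_elements[OF assms(3)] .
  define w where "w z = T ((\<lambda>_. undefined)(a := z))" for z
  have image: "(\<lambda>i. i a) ` M \<subseteq> {z. z < n a \<and> w z \<noteq> 0}"
  proof
    fix z assume "z \<in> (\<lambda>i. i a) ` M"
    then obtain i where "i \<in> M" "z = i a" by blast
    with assms(4) have i: "i \<in> PiE {a} (\<lambda>a. {..<n a})" "T i \<noteq> 0"
      by (auto simp: matching_def index_tuples_def)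
    then have "(\<lambda>_. undefined)(a := i a) = i"
      by (force simp: PiE_iff extensional_def fun_eq_iff)
    then have "w z = T i"
      using \<open>z = i a\<close> by (simp add: w_def)
    with i \<open>z = i a\<close> show "z \<in> {z. z < n a \<and> w z \<noteq> 0}"
      by (simp add: PiE_iff)
  qed
  have "card M = card ((\<lambda>i. i a) ` M)"
    using assms(4) by (intro card_image[symmetric]) (simp add: matching_def)
  also have "\<dots> \<le> card {z. z < n a \<and> w z \<noteq> 0}"
    using image by (intro card_mono) simp_all
  finally have "card M \<le> card {z. z < n a \<and> w z \<noteq> 0}" .
  then have support: "p \<le> card {z. z < n a \<and> w z \<noteq> 0} + 1"
    using assms(5) by linarith
  show ?thesis
    unfolding attains_all_def
  proof
    fix v
    obtain y where "\<forall>j<n a. y j \<in> {s, t}" "(\<Sum>j<n a. w j * y j) = v"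
      using linear_form_attains_all[OF p st(3) support] by blast
    then show "\<exists>x. (\<forall>b\<in>{a}. \<forall>j<n b. x b j \<in> S b) \<and> multilinear_form_on {a} n T x = v"
      using st by (intro exI[of _ "\<lambda>_. y"]) (auto simp: multilinear_form_on_singleton w_def)
  qed
qed

lemma matching_contraction_keeps_half:
  assumes "finite D" "a \<in> D" "b \<in> D" "b \<noteq> a" "s \<noteq> t" and M: "matching D n T M"
  shows "\<exists>y M'. (\<forall>z. y z \<in> {s, t}) \<and> matching (D - {a}) n (contract a n T y) M'
           \<and> card M \<le> 2 * card M'"
proof -
  have tuples: "M \<subseteq> index_tuples D n" and nonzero: "\<And>i. i \<in> M \<Longrightarrow> T i \<noteq> 0"
    and inj: "\<And>c. c \<in> D \<Longrightarrow> inj_on (\<lambda>i. i c) M"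
    using M by (auto simp: matching_def)
  have "finite M"
    using matching_finite[OF \<open>finite D\<close> M] .
  define y where "y L = (\<lambda>z. if z \<in> (\<lambda>i. i a) ` L then t else s)"
    for L :: "(nat \<Rightarrow> nat) set"
  define res where "res i = i(a := undefined)" for i :: "nat \<Rightarrow> nat"
  have toggle: "contract a n T (y L) (res l) \<noteq> 0 \<or> contract a n T (y (insert l L)) (res l) \<noteq> 0"
    if l: "l \<in> M" "L \<subseteq> M - {l}" for l L
  proof -
    have "l a < n a"
      using tuples l(1) \<open>a \<in> D\<close> by (auto simp: index_tuples_def PiE_iff)
    moreover have "l a \<notin> (\<lambda>i. i a) ` L"
      using inj_onD[OF inj[OF \<open>a \<in> D\<close>]] l by blast
    ultimately have "contract a n T (y (insert l L)) (res l) - contract a n T (y L) (res l)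
        = T l * (t - s)"
      using contract_toggle_diff[of "l a" n a "(\<lambda>i. i a) ` L" T t s "res l"]
      by (simp add: y_def res_def)
    then show ?thesis
      using nonzero[OF l(1)] \<open>s \<noteq> t\<close> by auto
  qed
  have "\<exists>L\<subseteq>M. card M \<le> 2 * card {l\<in>M. contract a n T (y L) (res l) \<noteq> 0}"
    using \<open>finite M\<close> toggle by (rule averaging_over_subsets)
  then obtain L where half: "card M \<le> 2 * card {l\<in>M. contract a n T (y L) (res l) \<noteq> 0}"
    by blast
  define G where "G = {l\<in>M. contract a n T (y L) (res l) \<noteq> 0}"
  have res_apply: "res i c = i c" if "c \<in> D - {a}" for i c
    using that by (simp add: res_def)
  have inj_res: "inj_on res G"
  proof (rule inj_onI)
    fix i j assume "i \<in> G" "j \<in> G" "res i = res j"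
    then have "i b = j b"
      using res_apply[of b i] res_apply[of b j] \<open>b \<in> D\<close> \<open>b \<noteq> a\<close> by simp
    then show "i = j"
      using inj_onD[OF inj[OF \<open>b \<in> D\<close>]] \<open>i \<in> G\<close> \<open>j \<in> G\<close> by (auto simp: G_def)
  qed
  have "matching (D - {a}) n (contract a n T (y L)) (res ` G)"
    unfolding matching_def
  proof (intro conjI ballI)
    show "res ` G \<subseteq> index_tuples (D - {a}) n"
      using tuples index_tuples_restrict by (fastforce simp: G_def res_def)
    show "contract a n T (y L) i \<noteq> 0" if "i \<in> res ` G" for i
      using that by (auto simp: G_def)
    show "inj_on (\<lambda>i. i c) (res ` G)" if c: "c \<in> D - {a}" for c
    proof (rule inj_onI)
      fix i j assume "i \<in> res ` G" "j \<in> res ` G" "i c = j c"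
      then obtain i' j' where "i' \<in> G" "j' \<in> G" "i = res i'" "j = res j'" "i' c = j' c"
        using res_apply[OF c] by auto
      then show "i = j"
        using inj_onD[OF inj, of c i' j'] c by (auto simp: G_def)
    qed
  qed
  moreover have "card (res ` G) = card G"
    using card_image[OF inj_res] .
  moreover have "\<forall>z. y L z \<in> {s, t}"
    by (simp add: y_def)
  ultimately show ?thesis
    using half by (intro exI[of _ "y L"] exI[of _ "res ` G"]) (simp add: G_def)
qed

lemma matching_attains_all:
  fixes T :: "(nat \<Rightarrow> nat) \<Rightarrow> 'a::{field,finite}"
  assumes p: "prime p" "CARD('a) = p"
  shows "finite D \<Longrightarrow> card D = Suc k \<Longrightarrow> \<forall>a\<in>D. 2 \<le> card (S a) \<Longrightarrow> matching D n T M
    \<Longrightarrow> 2 ^ Suc k * p \<le> card M \<Longrightarrow> attains_all D n T S"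
proof (induction k arbitrary: D T M)
  case 0
  then obtain a where D: "D = {a}"
    by (auto simp: card_Suc_eq)
  have "2 \<le> card (S a)" "matching {a} n T M"
    using "0.prems"(3,4) D by simp_all
  moreover have "p \<le> card M + 1"
    using "0.prems"(5) by simp
  ultimately show ?case
    unfolding D by (rule matching_singleton_attains_all[OF p])
next
  case (Suc k)
  have "2 \<le> card D"
    using Suc.prems(2) by simp
  then obtain a b where ab: "a \<in> D" "b \<in> D" "b \<noteq> a"
    by (rule two_distinct_elements)
  obtain s t where st: "s \<in> S a" "t \<in> S a" "s \<noteq> t"
    using two_distinct_elements Suc.prems(3) ab(1) by blast
  obtain y M' where y: "\<forall>z. y z \<in> {s, t}"
    and M': "matching (D - {a}) n (contract a n T y) M'" "card M \<le> 2 * card M'"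
    using matching_contraction_keeps_half[OF Suc.prems(1) ab st(3) Suc.prems(4)] by blast
  have "attains_all (D - {a}) n (contract a n T y) S"
    using Suc.IH[OF _ _ _ M'(1)] Suc.prems M'(2) ab(1) by simp
  moreover have "\<forall>z<n a. y z \<in> S a"
    using y st by auto
  ultimately show ?case
    using attains_all_if_contraction_attains_all[OF Suc.prems(1) ab(1)] by blast
qed

lemma maximum_matching_covers:
  assumes "finite D" "D \<noteq> {}"
  obtains M where "matching D n T M"
    and "\<forall>i\<in>index_tuples D n. T i \<noteq> 0 \<longrightarrow> (\<exists>a\<in>D. i a \<in> (\<lambda>j. j a) ` M)"
proof -
  have fin: "finite (index_tuples D n)"
    using finite_index_tuples[OF assms(1)] .
  have "matching D n T {}"
    by (simp add: matching_def)
  moreover have "\<forall>M. matching D n T M \<longrightarrow> card M < card (index_tuples D n) + 1"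
    using fin by (auto simp: matching_def intro: card_mono le_imp_less_Suc)
  ultimately have "\<exists>M. matching D n T M \<and> (\<forall>M'. matching D n T M' \<longrightarrow> card M' \<le> card M)"
    by (rule Lattices_Big.ex_has_greatest_nat)
  then obtain M where M: "matching D n T M"
    and max: "\<And>M'. matching D n T M' \<Longrightarrow> card M' \<le> card M"
    by blast
  have "\<exists>a\<in>D. i a \<in> (\<lambda>j. j a) ` M" if i: "i \<in> index_tuples D n" "T i \<noteq> 0" for i
  proof (rule ccontr)
    assume uncovered: "\<not> ?thesis"
    then have "i \<notin> M"
      using assms(2) by blast
    have "matching D n T (insert i M)"
      using M i uncovered by (auto simp: matching_def)
    then have "card (insert i M) \<le> card M"
      by (rule max)
    moreover have "finite M"
      using matching_finite[OF assms(1) M] .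
    ultimately show False
      using \<open>i \<notin> M\<close> by simp
  qed
  with M that show ?thesis by blast
qed

section \<open>Rank bounds from small matchings\<close>

definition rank_at_most :: "nat set \<Rightarrow> (nat \<Rightarrow> nat) \<Rightarrow> ((nat \<Rightarrow> nat) \<Rightarrow> 'a::field) \<Rightarrow> nat \<Rightarrow> bool"
  where
  "rank_at_most D n T m \<longleftrightarrow> (\<exists>k\<le>m. \<exists>f :: nat \<Rightarrow> nat \<Rightarrow> nat \<Rightarrow> 'a.
     \<forall>i\<in>index_tuples D n. T i = (\<Sum>r<k. \<Prod>a\<in>D. f r a (i a)))"

lemma rank_at_most_cong:
  assumes "rank_at_most D n T m" "\<And>i. i \<in> index_tuples D n \<Longrightarrow> T i = T' i"
  shows "rank_at_most D n T' m"
  using assms unfolding rank_at_most_def by auto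

lemma rank_at_most_mono: "rank_at_most D n T m \<Longrightarrow> m \<le> m' \<Longrightarrow> rank_at_most D n T m'"
  unfolding rank_at_most_def using order_trans by blast

lemma rank_at_most_zero: "rank_at_most D n (\<lambda>_. 0) m"
  unfolding rank_at_most_def by auto

lemma rank_at_most_add:
  assumes "rank_at_most D n T1 m1" "rank_at_most D n T2 m2"
  shows "rank_at_most D n (\<lambda>i. T1 i + T2 i) (m1 + m2)"
proof -
  obtain k1 f1 where k1: "k1 \<le> m1" "\<forall>i\<in>index_tuples D n. T1 i = (\<Sum>r<k1. \<Prod>a\<in>D. f1 r a (i a))"
    using assms(1) unfolding rank_at_most_def by blast
  obtain k2 f2 where k2: "k2 \<le> m2" "\<forall>i\<in>index_tuples D n. T2 i = (\<Sum>r<k2. \<Prod>a\<in>D. f2 r a (i a))"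
    using assms(2) unfolding rank_at_most_def by blast
  define f where "f r = (if r < k1 then f1 r else f2 (r - k1))" for r
  have "(\<Sum>r<k1 + k2. g r) = (\<Sum>r<k1. g r) + (\<Sum>r<k2. g (k1 + r))" for g :: "nat \<Rightarrow> 'a"
    by (induction k2) (auto simp: add.assoc)
  then have "T1 i + T2 i = (\<Sum>r<k1 + k2. \<Prod>a\<in>D. f r a (i a))" if "i \<in> index_tuples D n" for i
    using k1(2) k2(2) that by (simp add: f_def)
  then show ?thesis
    unfolding rank_at_most_def using k1(1) k2(1)
    by (intro exI[of _ "k1 + k2"] conjI exI[of _ f]) auto
qed

lemma rank_at_most_sum:
  assumes "finite A" "\<And>c. c \<in> A \<Longrightarrow> rank_at_most D n (P c) (m c)"
  shows "rank_at_most D n (\<lambda>i. \<Sum>c\<in>A. P c i) (\<Sum>c\<in>A. m c)"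
  using assms by (induction A rule: finite_induct) (auto intro: rank_at_most_zero rank_at_most_add)

lemma rank_at_most_mult_rank_one:
  assumes "rank_at_most D n T m"
  shows "rank_at_most D n (\<lambda>i. (\<Prod>a\<in>D. g a (i a)) * T i) m"
proof -
  obtain k f where k: "k \<le> m" "\<forall>i\<in>index_tuples D n. T i = (\<Sum>r<k. \<Prod>a\<in>D. f r a (i a))"
    using assms unfolding rank_at_most_def by blast
  have "(\<Prod>a\<in>D. g a (i a)) * T i = (\<Sum>r<k. \<Prod>a\<in>D. g a (i a) * f r a (i a))"
    if "i \<in> index_tuples D n" for i
    using k(2) that by (simp add: sum_distrib_left prod.distrib)
  then show ?thesis
    unfolding rank_at_most_def using k(1)
    by (intro exI[of _ k] conjI exI[of _ "\<lambda>r a z. g a z * f r a z"]) auto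
qed

lemma rank_at_most_scale:
  assumes "finite D" "b \<in> D" "rank_at_most D n T m"
  shows "rank_at_most D n (\<lambda>i. c * T i) m"
proof -
  have "(\<Prod>a\<in>D. (\<lambda>a z. if a = b then c else 1) a (i a)) = c" for i
    using assms(1,2) by (simp add: prod.delta)
  then show ?thesis
    using rank_at_most_mult_rank_one[OF assms(3), of "\<lambda>a z. if a = b then c else 1"] by simp
qed

lemma rank_at_most_singleton: "rank_at_most {a} n T 1"
proof -
  have "T i = (\<Sum>r<1::nat. \<Prod>b\<in>{a}. T ((\<lambda>_. undefined)(a := i b)))"
    if "i \<in> index_tuples {a} n" for i
  proof -
    have "(\<lambda>_. undefined)(a := i a) = i"
      using that by (force simp: index_tuples_def PiE_iff extensional_def fun_eq_iff)
    then show ?thesis by simp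
  qed
  then show ?thesis
    unfolding rank_at_most_def
    by (intro exI[of _ 1] conjI exI[of _ "\<lambda>r b z. T ((\<lambda>_. undefined)(a := z))"]) auto
qed

lemma rank_at_most_extend_slice:
  assumes "finite D" "a \<in> D" and slice: "rank_at_most (D - {a}) n (\<lambda>j. T (j(a := v))) m"
  shows "rank_at_most D n (\<lambda>i. if i a = v then T i else 0) m"
proof -
  obtain k f where k: "k \<le> m"
    and f: "\<forall>j\<in>index_tuples (D - {a}) n. T (j(a := v)) = (\<Sum>r<k. \<Prod>b\<in>D - {a}. f r b (j b))"
    using slice unfolding rank_at_most_def by blast
  define g where "g r b = (if b = a then (\<lambda>z. if z = v then 1 else 0) else f r b)" for r b
  have "(if i a = v then T i else 0) = (\<Sum>r<k. \<Prod>b\<in>D. g r b (i b))"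
    if i: "i \<in> index_tuples D n" for i
  proof -
    have "T ((i(a := undefined))(a := v))
        = (\<Sum>r<k. \<Prod>b\<in>D - {a}. f r b ((i(a := undefined)) b))"
      using f index_tuples_restrict[OF i] by blast
    moreover have "(\<Prod>b\<in>D - {a}. f r b ((i(a := undefined)) b)) = (\<Prod>b\<in>D - {a}. f r b (i b))"
      for r
      by (rule prod.cong) auto
    ultimately have "T (i(a := v)) = (\<Sum>r<k. \<Prod>b\<in>D - {a}. f r b (i b))"
      by simp
    moreover have "(\<Prod>b\<in>D. g r b (i b)) = (if i a = v then 1 else 0) * (\<Prod>b\<in>D - {a}. f r b (i b))"
      for r
    proof -
      have "(\<Prod>b\<in>D - {a}. g r b (i b)) = (\<Prod>b\<in>D - {a}. f r b (i b))"
        by (rule prod.cong) (auto simp: g_def)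
      then show ?thesis
        using prod.remove[OF assms(1,2), of "\<lambda>b. g r b (i b)"] by (simp add: g_def[of r a])
    qed
    ultimately show ?thesis
      by (auto simp: fun_upd_idem)
  qed
  then show ?thesis
    unfolding rank_at_most_def using k by (intro exI[of _ k] conjI exI[of _ g]) auto
qed

lemma rank_at_most_slice:
  assumes "finite D" "b \<in> D" "v < n a" "s \<noteq> t"
    and "rank_at_most D n (contract a n T (\<lambda>z. if z = v then t else s)) m1"
    and "rank_at_most D n (contract a n T (\<lambda>_. s)) m0"
  shows "rank_at_most D n (\<lambda>j. T (j(a := v))) (m1 + m0)"
proof -
  let ?c = "inverse (t - s)"
  have "rank_at_most D n (\<lambda>j. ?c * contract a n T (\<lambda>z. if z = v then t else s) j
      + (- ?c) * contract a n T (\<lambda>_. s) j) (m1 + m0)"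
    using assms by (intro rank_at_most_add rank_at_most_scale)
  moreover have "?c * contract a n T (\<lambda>z. if z = v then t else s) j
      + (- ?c) * contract a n T (\<lambda>_. s) j = T (j(a := v))" for j
  proof -
    have "contract a n T (\<lambda>z. if z = v then t else s) j - contract a n T (\<lambda>_. s) j
        = T (j(a := v)) * (t - s)"
      using contract_toggle_diff[of v n a "{}" T t s j] \<open>v < n a\<close> by simp
    then show ?thesis
      using \<open>s \<noteq> t\<close> by (simp add: right_diff_distrib[symmetric])
  qed
  ultimately show ?thesis
    by (rule rank_at_most_cong)
qed

lemma sum_first_hit:
  fixes D :: "nat set" and x :: "'a::comm_monoid_add"
  assumes "finite D" "\<And>a. a \<in> D \<Longrightarrow> finite (C a)" "\<exists>a\<in>D. i a \<in> C a"
  shows "(\<Sum>c\<in>Sigma D C. if i (fst c) = snd c \<and> (\<forall>b\<in>D. b < fst c \<longrightarrow> i b \<notin> C b) then x else 0)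
    = x"
proof -
  define a0 where "a0 = (LEAST b. b \<in> D \<and> i b \<in> C b)"
  have "a0 \<in> D \<and> i a0 \<in> C a0"
    using assms(3) unfolding a0_def by (metis (mono_tags, lifting) LeastI)
  moreover have "a0 \<le> b" if "b \<in> D" "i b \<in> C b" for b
    unfolding a0_def using that by (intro Least_le) simp
  ultimately have a0: "a0 \<in> D" "i a0 \<in> C a0" "\<And>b. b \<in> D \<Longrightarrow> i b \<in> C b \<Longrightarrow> a0 \<le> b"
    by auto
  have first: "i a = v \<and> (\<forall>b\<in>D. b < a \<longrightarrow> i b \<notin> C b) \<longleftrightarrow> (a, v) = (a0, i a0)"
    if "a \<in> D" "v \<in> C a" for a v
  proof
    assume hit: "i a = v \<and> (\<forall>b\<in>D. b < a \<longrightarrow> i b \<notin> C b)"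
    then have "a0 \<le> a" "\<not> a0 < a"
      using a0 that by auto
    then show "(a, v) = (a0, i a0)"
      using hit by simp
  next
    assume "(a, v) = (a0, i a0)"
    then show "i a = v \<and> (\<forall>b\<in>D. b < a \<longrightarrow> i b \<notin> C b)"
      using a0(3) by force
  qed
  have "(\<Sum>c\<in>Sigma D C. if i (fst c) = snd c \<and> (\<forall>b\<in>D. b < fst c \<longrightarrow> i b \<notin> C b) then x else 0)
      = (\<Sum>c\<in>Sigma D C. if c = (a0, i a0) then x else 0)"
  proof (rule sum.cong[OF refl])
    fix c assume "c \<in> Sigma D C"
    then obtain a v where "c = (a, v)" "a \<in> D" "v \<in> C a"
      by blast
    then show "(if i (fst c) = snd c \<and> (\<forall>b\<in>D. b < fst c \<longrightarrow> i b \<notin> C b) then x else 0)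
        = (if c = (a0, i a0) then x else 0)"
      using first[of a v] by simp
  qed
  also have "\<dots> = x"
    using assms(1,2) a0(1,2) by (simp add: sum.delta')
  finally show ?thesis .
qed

lemma rank_at_most_cover:
  assumes "finite D" "\<And>a. a \<in> D \<Longrightarrow> finite (C a)"
    and cover: "\<And>i. i \<in> index_tuples D n \<Longrightarrow> T i \<noteq> 0 \<Longrightarrow> \<exists>a\<in>D. i a \<in> C a"
    and slices: "\<And>a v. a \<in> D \<Longrightarrow> v \<in> C a \<Longrightarrow> rank_at_most (D - {a}) n (\<lambda>j. T (j(a := v))) m"
  shows "rank_at_most D n T (card (Sigma D C) * m)"
proof -
  \<comment> \<open>Each nonzero entry is charged to the slice of its first coordinate, in the order of
    \<open>D \<subseteq> \<nat>\<close>, that lies in the cover.\<close>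
  define P where "P c i = (if i (fst c) = snd c \<and> (\<forall>b\<in>D. b < fst c \<longrightarrow> i b \<notin> C b)
    then T i else 0)" for c i
  have "rank_at_most D n (P c) m" if "c \<in> Sigma D C" for c
  proof -
    obtain a v where c: "c = (a, v)" "a \<in> D" "v \<in> C a"
      using \<open>c \<in> Sigma D C\<close> by blast
    have "rank_at_most D n (\<lambda>i. (\<Prod>b\<in>D. (\<lambda>b z. if b < a \<and> z \<in> C b then 0 else 1) b (i b))
        * (if i a = v then T i else 0)) m"
      by (intro rank_at_most_mult_rank_one rank_at_most_extend_slice slices assms(1) c)
    moreover have "(\<Prod>b\<in>D. if b < a \<and> i b \<in> C b then 0 else 1) * (if i a = v then T i else 0)
        = P c i" for i
    proof (cases "\<exists>b\<in>D. b < a \<and> i b \<in> C b")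
      case True
      then show ?thesis
        using \<open>finite D\<close> by (auto simp: P_def c(1) prod_zero_iff)
    next
      case False
      then show ?thesis
        by (auto simp: P_def c(1) intro: prod.neutral)
    qed
    ultimately show ?thesis
      by (rule rank_at_most_cong)
  qed
  then have "rank_at_most D n (\<lambda>i. \<Sum>c\<in>Sigma D C. P c i) (\<Sum>c\<in>Sigma D C. m)"
    using assms(1,2) by (intro rank_at_most_sum) auto
  moreover have "(\<Sum>c\<in>Sigma D C. P c i) = T i" if "i \<in> index_tuples D n" for i
  proof (cases "T i = 0")
    case True
    then show ?thesis by (simp add: P_def sum.neutral)
  next
    case False
    then show ?thesis
      using sum_first_hit[OF assms(1,2) cover[OF that False]] by (simp add: P_def)
  qed
  ultimately show ?thesis
    by (simp add: rank_at_most_cong)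
qed

lemma slice_rank_at_most:
  assumes "finite D" "a \<in> D" "b \<in> D - {a}" "v < n a" "2 \<le> card (S a)"
    and "\<not> attains_all D n T S"
    and lower: "\<And>T'. \<not> attains_all (D - {a}) n T' S \<Longrightarrow> rank_at_most (D - {a}) n T' R"
  shows "rank_at_most (D - {a}) n (\<lambda>j. T (j(a := v))) (2 * R)"
proof -
  obtain s t where st: "s \<in> S a" "t \<in> S a" "s \<noteq> t"
    using two_distinct_elements[OF assms(5)] .
  have "rank_at_most (D - {a}) n (contract a n T y) R" if "\<forall>z<n a. y z \<in> S a" for y
    using attains_all_if_contraction_attains_all[of D a n y S T] assms(1,2,6) that lower by blast
  then show ?thesis
    using rank_at_most_slice[of "D - {a}" b v n a s t T] assms(1,3,4) st by (simp add: mult_2)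
qed

text \<open>A maximum matching has fewer than \<open>2\<^sup>k\<^sup>+\<^sup>2 p\<close> elements, each contributing \<open>k + 2\<close> slices
  of rank at most \<open>2 \<cdot> rank_bound p k\<close>.\<close>

fun rank_bound :: "nat \<Rightarrow> nat \<Rightarrow> nat" where
  "rank_bound p 0 = 1"
| "rank_bound p (Suc k) = Suc (Suc k) * (2 ^ Suc (Suc k) * p) * (2 * rank_bound p k)"

lemma rank_at_most_if_not_attains_all:
  fixes T :: "(nat \<Rightarrow> nat) \<Rightarrow> 'a::{field,finite}"
  assumes p: "prime p" "CARD('a) = p"
  shows "finite D \<Longrightarrow> card D = Suc k \<Longrightarrow> \<forall>a\<in>D. 2 \<le> card (S a) \<Longrightarrow> \<not> attains_all D n T S
    \<Longrightarrow> rank_at_most D n T (rank_bound p k)"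
proof (induction k arbitrary: D T)
  case 0
  then obtain a where "D = {a}"
    by (auto simp: card_Suc_eq)
  then show ?case
    using rank_at_most_singleton by simp
next
  case (Suc k)
  define K where "K = 2 ^ Suc (Suc k) * p"
  have "D \<noteq> {}"
    using Suc.prems(2) by auto
  then obtain M where M: "matching D n T M"
    and cover: "\<forall>i\<in>index_tuples D n. T i \<noteq> 0 \<longrightarrow> (\<exists>a\<in>D. i a \<in> (\<lambda>j. j a) ` M)"
    using maximum_matching_covers[OF Suc.prems(1)] by blast
  have "card M < K"
    using matching_attains_all[OF p Suc.prems(1-3) M] Suc.prems(4) unfolding K_def by linarith
  define C where "C a = (\<lambda>j. j a) ` M" for a
  have "finite M"
    using matching_finite[OF Suc.prems(1) M] .
  have card_C: "card (C a) < K" for a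
    using card_image_le[OF \<open>finite M\<close>, of "\<lambda>j. j a"] \<open>card M < K\<close> unfolding C_def by linarith
  have "rank_at_most (D - {a}) n (\<lambda>j. T (j(a := v))) (2 * rank_bound p k)"
    if a: "a \<in> D" and v: "v \<in> C a" for a v
  proof -
    have D': "finite (D - {a})" "card (D - {a}) = Suc k" "\<forall>b\<in>D - {a}. 2 \<le> card (S b)"
      using Suc.prems(1-3) a by auto
    then have "D - {a} \<noteq> {}"
      by (metis card.empty nat.distinct(1))
    then obtain b where "b \<in> D - {a}"
      by blast
    moreover have "v < n a"
      using M v a by (auto simp: C_def matching_def index_tuples_def PiE_iff)
    ultimately show ?thesis
      using Suc.prems(3,4) a
      by (intro slice_rank_at_most[OF Suc.prems(1)] Suc.IH[OF D']) auto
  qed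
  then have "rank_at_most D n T (card (Sigma D C) * (2 * rank_bound p k))"
    using Suc.prems(1) \<open>finite M\<close> cover
    by (intro rank_at_most_cover) (auto simp: C_def)
  moreover have "card (Sigma D C) \<le> Suc (Suc k) * K"
  proof -
    have "card (Sigma D C) = (\<Sum>a\<in>D. card (C a))"
      using Suc.prems(1) \<open>finite M\<close> by (intro card_SigmaI) (auto simp: C_def)
    also have "\<dots> \<le> (\<Sum>a\<in>D. K)"
      using card_C by (intro sum_mono less_imp_le)
    finally show ?thesis
      using Suc.prems(2) by simp
  qed
  ultimately show ?case
    unfolding K_def by (auto intro: rank_at_most_mono mult_right_mono)
qed

lemma tensor_rank_le_if_rank_at_most:
  "rank_at_most {..<d} n T m \<Longrightarrow> tensor_rank d n T \<le> m"
  unfolding rank_at_most_def tensor_rank_def index_tuples_def tensor_indices_def atLeast0LessThan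
  by (auto intro: Least_le[THEN order_trans])

lemma multilinear_form_eq_multilinear_form_on:
  "multilinear_form d n T x = multilinear_form_on {..<d} n T x"
  by (simp add: multilinear_form_def multilinear_form_on_def index_tuples_def tensor_indices_def
      atLeast0LessThan)

theorem proposition6p3:
  fixes p d :: nat
  assumes "prime p" and "p \<ge> 3" and "CARD('a) = p" and "d \<ge> 2"
  shows "\<exists>\<Theta>::nat. \<forall>(n :: nat \<Rightarrow> nat) (T :: (nat \<Rightarrow> nat) \<Rightarrow> 'a::{field,finite}) (S :: nat \<Rightarrow> 'a set).
           tensor_rank d n T \<ge> \<Theta> \<and> (\<forall>a<d. card (S a) \<ge> 2) \<longrightarrow>
           {multilinear_form d n T x | x. \<forall>a<d. \<forall>j<n a. x a j \<in> S a} = (UNIV :: 'a set)"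
proof (intro exI[of _ "Suc (rank_bound p (d - 1))"] allI impI, elim conjE)
  fix n :: "nat \<Rightarrow> nat" and T :: "(nat \<Rightarrow> nat) \<Rightarrow> 'a" and S :: "nat \<Rightarrow> 'a set"
  assume rank: "Suc (rank_bound p (d - 1)) \<le> tensor_rank d n T" and S: "\<forall>a<d. 2 \<le> card (S a)"
  have all: "attains_all {..<d} n T S"
  proof (rule ccontr)
    assume not_all: "\<not> attains_all {..<d} n T S"
    have "card {..<d} = Suc (d - 1)"
      using \<open>d \<ge> 2\<close> by simp
    then have "rank_at_most {..<d} n T (rank_bound p (d - 1))"
      using rank_at_most_if_not_attains_all[OF \<open>prime p\<close> \<open>CARD('a) = p\<close> finite_lessThan] S not_all
      by blast
    then show False
      using tensor_rank_le_if_rank_at_most rank by fastforce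
  qed
  have "v \<in> {multilinear_form d n T x | x. \<forall>a<d. \<forall>j<n a. x a j \<in> S a}" for v
  proof -
    obtain x where "\<forall>a\<in>{..<d}. \<forall>j<n a. x a j \<in> S a" "multilinear_form_on {..<d} n T x = v"
      using all unfolding attains_all_def by blast
    then show ?thesis
      by (auto simp: multilinear_form_eq_multilinear_form_on)
  qed
  then show "{multilinear_form d n T x | x. \<forall>a<d. \<forall>j<n a. x a j \<in> S a} = UNIV"
    by blast
qed

end
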